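(* For $\tau>-1$, the function $r\mapsto\frac{h_u'(r)}{r}$ is increasing on $(0,j_\tau)$, where $h_u(r):=r\frac{J_{\tau+1}(r)}{J_\tau(r)}$.
   Context: $J_\tau$ denotes the Bessel function of the first kind of order $\tau$ and $j_\tau$ its first positive zero. *)

theory Defs
  imports "HOL-Analysis.Analysis"
begin

text \<open>Bessel function of the first kind of real order tau, via its power series
  (used for r > 0):
  J_tau(r) = sum_m (-1)^m / (m! Gamma(m+tau+1)) (r/2)^(2m+tau).\<close>
definition besselJ :: "real \<Rightarrow> real \<Rightarrow> real" where
  "besselJ \<tau> r = (\<Sum>m. (-1) ^ m / (fact m * Gamma (real m + \<tau> + 1)) * (r / 2) powr (2 * real m + \<tau>))"

definition bessel_zero :: "real \<Rightarrow> real" where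
  "bessel_zero \<tau> = Inf {r. 0 < r \<and> besselJ \<tau> r = 0}"

definition h_u :: "real \<Rightarrow> real \<Rightarrow> real" where
  "h_u \<tau> r = r * besselJ (\<tau> + 1) r / besselJ \<tau> r"

end

theory Submission
  imports Defs
begin

text \<open>
  With y = r^2/4 one has J_t(r) = (r/2)^t B_0(y) and J_(t+1)(r) = (r/2)^(t+1) B_1(y) for
  entire power series B_k satisfying B_k' = -B_(k+1). Hence h_u(r) = 2 y u(y) with
  u = B_1 / B_0, and h_u'(r) / r = u + y u'. The three-term recurrence of the B_k becomes the
  Riccati equation y u' = 1 - (t + 1) u + y u^2. Differentiating it once and twice shows that
  at a positive zero of u, of u' (where u > 0), or of u'' (where u, u' > 0) the function in
  question is increasing. All three are positive at 0, so they stay positive as long as B_0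
  does not vanish, i.e. for y < (j_t / 2)^2; hence (u + y u')' = 2 u' + y u'' > 0 there.
\<close>

definition bessel_coeff :: "real \<Rightarrow> nat \<Rightarrow> real" where
  "bessel_coeff t m = (-1) ^ m / (fact m * Gamma (real m + t + 1))"

lemma Gamma_plus1_real_pos: "x > 0 \<Longrightarrow> Gamma (x + 1) = x * Gamma (x :: real)"
  by (rule Gamma_plus1) (auto elim!: nonpos_Ints_cases)

lemma bessel_coeff_shift:
  assumes "t > -1"
  shows "(real m + t + 1) * bessel_coeff (t + 1) m = bessel_coeff t m"
proof -
  have pos: "real m + t + 1 > 0"
    using assms by linarith
  have "Gamma (real m + (t + 1) + 1) = Gamma ((real m + t + 1) + 1)"
    by (simp add: algebra_simps)
  also have "\<dots> = (real m + t + 1) * Gamma (real m + t + 1)"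
    using pos by (rule Gamma_plus1_real_pos)
  finally show ?thesis
    using pos by (simp add: bessel_coeff_def)
qed

lemma diffs_bessel_coeff: "diffs (bessel_coeff t) = (\<lambda>n. - bessel_coeff (t + 1) n)"
proof
  fix n
  have "real (Suc n) + t + 1 = real n + (t + 1) + 1"
    by simp
  moreover have "real (Suc n) * (a / (real (Suc n) * b)) = a / b" for a b :: real
    by (simp del: of_nat_Suc)
  ultimately show "diffs (bessel_coeff t) n = - bessel_coeff (t + 1) n"
    unfolding diffs_def bessel_coeff_def by (simp only: fact_Suc of_nat_mult mult.assoc) simp
qed

lemma bessel_coeff_Suc:
  assumes "t > -1"
  shows "bessel_coeff t (Suc n) = - bessel_coeff t n / ((real n + 1) * (real n + t + 1))"
proof -
  have "real (Suc n) * bessel_coeff t (Suc n) = - bessel_coeff (t + 1) n"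
    using diffs_bessel_coeff[of t] unfolding diffs_def by metis
  then have "bessel_coeff t (Suc n) = - bessel_coeff (t + 1) n / (real n + 1)"
    by (intro eq_divide_imp) (simp_all add: algebra_simps)
  moreover have "bessel_coeff (t + 1) n = bessel_coeff t n / (real n + t + 1)"
    using bessel_coeff_shift[OF assms, of n] assms by (simp add: eq_divide_eq algebra_simps)
  ultimately show ?thesis
    by simp
qed

lemma summable_bessel_coeff:
  assumes "t > -1"
  shows "summable (\<lambda>m. bessel_coeff t m * x ^ m)"
proof (rule summable_ratio_test[of "1/2" "nat \<lceil>2 * \<bar>x\<bar>\<rceil> + 1"])
  fix n assume "nat \<lceil>2 * \<bar>x\<bar>\<rceil> + 1 \<le> n"
  then have large: "real n \<ge> 2 * \<bar>x\<bar> + 1"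
    by linarith
  define d where "d = (real n + 1) * (real n + t + 1)"
  have "d \<ge> real n + t + 1"
    using mult_right_mono[of 1 "real n + 1" "real n + t + 1"] assms unfolding d_def by simp
  then have d: "d > 0" "2 * \<bar>x\<bar> \<le> d"
    using assms large by linarith+
  have "norm (bessel_coeff t (Suc n) * x ^ Suc n) = \<bar>x\<bar> / d * norm (bessel_coeff t n * x ^ n)"
    using d assms by (simp add: bessel_coeff_Suc[OF assms] d_def abs_mult power_abs)
  also have "\<dots> \<le> 1/2 * norm (bessel_coeff t n * x ^ n)"
    using d by (intro mult_right_mono) (auto simp: field_simps)
  finally show "norm (bessel_coeff t (Suc n) * x ^ Suc n) \<le> 1/2 * norm (bessel_coeff t n * x ^ n)" .
qed simp

definition bessel_series :: "real \<Rightarrow> real \<Rightarrow> real" where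
  "bessel_series t x = (\<Sum>m. bessel_coeff t m * x ^ m)"

lemma bessel_series_sums:
  "t > -1 \<Longrightarrow> (\<lambda>m. bessel_coeff t m * x ^ m) sums bessel_series t x"
  unfolding bessel_series_def by (rule summable_sums, rule summable_bessel_coeff)

lemma bessel_series_has_real_derivative:
  assumes "t > -1"
  shows "(bessel_series t has_real_derivative - bessel_series (t + 1) x) (at x)"
proof -
  have "(bessel_series t has_real_derivative (\<Sum>n. diffs (bessel_coeff t) n * x ^ n)) (at x)"
    unfolding bessel_series_def [abs_def] using assms
    by (intro termdiffs_strong_converges_everywhere summable_bessel_coeff)
  moreover have "(\<Sum>n. diffs (bessel_coeff t) n * x ^ n) = - bessel_series (t + 1) x"
    using sums_minus[OF bessel_series_sums[of "t + 1" x]] assms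
    by (simp add: diffs_bessel_coeff sums_iff)
  ultimately show ?thesis
    by simp
qed

lemma bessel_series_recurrence:
  assumes "t > -1"
  shows "x * bessel_series (t + 2) x = (t + 1) * bessel_series (t + 1) x - bessel_series t x"
proof -
  define g where "g m = real m * bessel_coeff (t + 1) m * x ^ m" for m
  have "(\<lambda>n. x * (bessel_coeff (t + 2) n * x ^ n)) sums (x * bessel_series (t + 2) x)"
    using assms by (intro sums_mult bessel_series_sums) simp
  moreover have "x * (bessel_coeff (t + 2) n * x ^ n) = - g (Suc n)" for n
    using fun_cong[OF diffs_bessel_coeff[of "t + 1"], of n]
    by (simp add: g_def diffs_def algebra_simps)
  ultimately have "(\<lambda>n. - g (Suc n)) sums (x * bessel_series (t + 2) x)"
    by simp
  then have "(\<lambda>n. g (Suc n)) sums (- (x * bessel_series (t + 2) x))"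
    using sums_minus by fastforce
  moreover have "g 0 = 0"
    by (simp add: g_def)
  ultimately have lhs: "g sums (- (x * bessel_series (t + 2) x))"
    by (simp add: sums_Suc_iff)
  have "(\<lambda>m. (t + 1) * (bessel_coeff (t + 1) m * x ^ m) - bessel_coeff t m * x ^ m)
          sums ((t + 1) * bessel_series (t + 1) x - bessel_series t x)"
    using assms by (intro sums_diff sums_mult bessel_series_sums) simp_all
  moreover have "(t + 1) * (bessel_coeff (t + 1) m * x ^ m) - bessel_coeff t m * x ^ m = - g m" for m
    unfolding g_def bessel_coeff_shift[OF assms, of m, symmetric] by (simp add: algebra_simps)
  ultimately have "(\<lambda>m. - g m) sums ((t + 1) * bessel_series (t + 1) x - bessel_series t x)"
    by simp
  then have rhs: "g sums (- ((t + 1) * bessel_series (t + 1) x - bessel_series t x))"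
    using sums_minus by fastforce
  show ?thesis
    using sums_unique2[OF lhs rhs] by simp
qed

lemma besselJ_eq_bessel_series:
  assumes "t > -1" and "r > 0"
  shows "besselJ t r = (r / 2) powr t * bessel_series t (r\<^sup>2 / 4)"
proof -
  have bessel_coeff_powr: "bessel_coeff t m * (r / 2) powr (2 * real m + t)
      = (r / 2) powr t * (bessel_coeff t m * (r\<^sup>2 / 4) ^ m)" for m
  proof -
    have "(r / 2) powr (2 * real m + t) = (r / 2) powr t * (r / 2) ^ (2 * m)"
      using assms(2) by (simp add: powr_add powr_realpow[symmetric] mult.commute)
    then show ?thesis
      by (simp add: power_mult power_divide)
  qed
  have "(\<lambda>m. bessel_coeff t m * (r / 2) powr (2 * real m + t))
      sums ((r / 2) powr t * bessel_series t (r\<^sup>2 / 4))"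
    unfolding bessel_coeff_powr by (rule sums_mult[OF bessel_series_sums[OF assms(1)]])
  then show ?thesis
    unfolding besselJ_def bessel_coeff_def by (simp add: sums_iff)
qed

lemma besselJ_nonzero_below_first_zero:
  assumes "0 < r" and "r < bessel_zero t"
  shows "besselJ t r \<noteq> 0"
proof
  assume "besselJ t r = 0"
  then have "bessel_zero t \<le> r"
    unfolding bessel_zero_def using assms(1) by (intro cInf_lower bdd_belowI[of _ 0]) auto
  with assms(2) show False
    by simp
qed

lemma pos_if_deriv_pos_at_zeros:
  fixes f f' :: "real \<Rightarrow> real"
  assumes "a \<le> b"
    and deriv: "\<And>y. a \<le> y \<Longrightarrow> y \<le> b \<Longrightarrow> (f has_real_derivative f' y) (at y)"
    and "f a > 0"
    and crossing: "\<And>y. a < y \<Longrightarrow> y \<le> b \<Longrightarrow> f y = 0 \<Longrightarrow> f' y > 0"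
  shows "f b > 0"
proof (rule ccontr)
  \<comment> \<open>f is negative just left of its first zero in [a, b], forcing an earlier zero\<close>
  assume "\<not> f b > 0"
  have cont: "continuous_on {a..b} f"
    using deriv by (intro DERIV_atLeastAtMost_imp_continuous_on) blast
  define Z where "Z = {y \<in> {a..b}. f y = 0}"
  obtain z0 where "a \<le> z0" "z0 \<le> b" "f z0 = 0"
    using IVT2'[of f b 0 a, OF _ _ \<open>a \<le> b\<close> cont] \<open>\<not> f b > 0\<close> \<open>f a > 0\<close> by auto
  then have "Z \<noteq> {}"
    unfolding Z_def by auto
  moreover have "closed Z"
    unfolding Z_def by (rule continuous_closed_preimage_constant[OF cont]) simp
  moreover have Z_bdd: "bdd_below Z"
    unfolding Z_def by (auto intro: bdd_belowI[of _ a])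
  ultimately have "Inf Z \<in> Z"
    by (intro closed_contains_Inf)
  then have s: "a \<le> Inf Z" "Inf Z \<le> b" "f (Inf Z) = 0"
    unfolding Z_def by auto
  then have "a < Inf Z"
    using \<open>f a > 0\<close> by (metis order.order_iff_strict less_irrefl)
  then have "f' (Inf Z) > 0"
    using crossing s by simp
  then obtain d where "d > 0" and below: "\<And>h. h > 0 \<Longrightarrow> h < d \<Longrightarrow> f (Inf Z - h) < 0"
    using DERIV_pos_inc_left[OF deriv[OF s(1,2)]] s(3) by auto
  define h where "h = min d (Inf Z - a) / 2"
  have h: "0 < h" "h < d" "h < Inf Z - a"
    using \<open>d > 0\<close> \<open>a < Inf Z\<close> unfolding h_def by auto
  have "continuous_on {a..Inf Z - h} f"
    using s(2) h(1) by (intro continuous_on_subset[OF cont]) auto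
  then obtain z where "a \<le> z" "z \<le> Inf Z - h" "f z = 0"
    using IVT2'[of f "Inf Z - h" 0 a] below[OF h(1,2)] \<open>f a > 0\<close> h(3) by auto
  then have "z \<in> Z"
    using s(2) h unfolding Z_def by auto
  then have "Inf Z \<le> z"
    using Z_bdd by (rule cInf_lower)
  with \<open>z \<le> Inf Z - h\<close> h(1) show False
    by linarith
qed

lemma DERIV_unique_on_open:
  fixes f g :: "real \<Rightarrow> real"
  assumes "open S" "x \<in> S" "\<And>y. y \<in> S \<Longrightarrow> f y = g y"
    and "(f has_real_derivative a) (at x)" "(g has_real_derivative b) (at x)"
  shows "a = b"
  using has_field_derivative_transform_within_open[OF assms(4,1,2,3)] assms(5) by (rule DERIV_unique)

locale bessel_ratio =
  fixes t :: real
  assumes order_gt: "t > -1"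
begin

text \<open>J_(t+k)(r) = (r/2)^(t+k) B k (r^2/4) for r > 0.\<close>

definition B :: "nat \<Rightarrow> real \<Rightarrow> real" where
  "B k = bessel_series (t + real k)"

lemma B_has_real_derivative: "(B k has_real_derivative - B (k + 1) y) (at y)"
proof -
  have "t + real k > -1"
    using order_gt by simp
  then show ?thesis
    using bessel_series_has_real_derivative[of "t + real k" y] by (simp add: B_def algebra_simps)
qed

lemma B_differentiable: "B k differentiable (at y)"
  using B_has_real_derivative real_differentiable_def by blast

lemma B_recurrence: "y * B 2 y = (t + 1) * B 1 y - B 0 y"
  using bessel_series_recurrence[OF order_gt] by (simp add: B_def)

lemma B0_at_0: "B 0 0 \<noteq> 0"
proof -
  have "Gamma (t + 1) > 0"
    using order_gt by (intro Gamma_real_pos) simp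
  then show ?thesis
    by (simp add: B_def bessel_series_def) (simp add: bessel_coeff_def)
qed

lemma open_B0_nonzero: "open {y. B 0 y \<noteq> 0}"
proof (rule open_Collect_neq)
  show "continuous_on UNIV (B 0)"
    using B_has_real_derivative by (meson DERIV_isCont continuous_at_imp_continuous_on)
qed simp

definition u :: "real \<Rightarrow> real" where
  "u y = B 1 y / B 0 y"

definition u' :: "real \<Rightarrow> real" where
  "u' y = (B 1 y ^ 2 - B 0 y * B 2 y) / B 0 y ^ 2"

definition u'' :: "real \<Rightarrow> real" where
  "u'' y = (B 0 y ^ 2 * B 3 y - 3 * B 0 y * B 1 y * B 2 y + 2 * B 1 y ^ 3) / B 0 y ^ 3"

lemma u_has_real_derivative: "B 0 y \<noteq> 0 \<Longrightarrow> (u has_real_derivative u' y) (at y)"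
  unfolding u_def [abs_def] u'_def
  by (rule derivative_eq_intros B_has_real_derivative refl
      | simp add: field_simps power2_eq_square numeral_2_eq_2)+

lemma u'_has_real_derivative: "B 0 y \<noteq> 0 \<Longrightarrow> (u' has_real_derivative u'' y) (at y)"
  unfolding u'_def [abs_def] u''_def
  by (rule derivative_eq_intros B_has_real_derivative refl
      | simp add: field_simps power2_eq_square power3_eq_cube numeral_2_eq_2 numeral_3_eq_3)+

text \<open>Only the existence of the third derivative of u matters, so it is taken to be deriv u''.\<close>

lemma u''_has_real_derivative: "B 0 y \<noteq> 0 \<Longrightarrow> (u'' has_real_derivative deriv u'' y) (at y)"
  unfolding DERIV_deriv_iff_real_differentiable u''_def [abs_def]
  by (intro derivative_intros B_differentiable) simp

lemma riccati:
  assumes "B 0 y \<noteq> 0"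
  shows "y * u' y = 1 - (t + 1) * u y + y * u y ^ 2"
proof -
  have "y * u' y = (y * B 1 y ^ 2 - B 0 y * (y * B 2 y)) / B 0 y ^ 2"
    by (simp add: u'_def algebra_simps)
  also have "\<dots> = (y * B 1 y ^ 2 - B 0 y * ((t + 1) * B 1 y - B 0 y)) / B 0 y ^ 2"
    by (simp only: B_recurrence)
  also have "\<dots> = 1 - (t + 1) * u y + y * u y ^ 2"
    using assms by (simp add: u_def field_simps power2_eq_square)
  finally show ?thesis .
qed

lemma riccati_deriv:
  assumes "B 0 y \<noteq> 0"
  shows "(t + 2) * u' y + y * u'' y = u y ^ 2 + 2 * y * u y * u' y"
proof -
  have "1 * u' y + y * u'' y = - (t + 1) * u' y + (u y ^ 2 + y * (2 * u y * u' y))"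
  proof (rule DERIV_unique_on_open[OF open_B0_nonzero _ riccati])
    show "((\<lambda>y. y * u' y) has_real_derivative 1 * u' y + y * u'' y) (at y)"
      by (rule derivative_eq_intros u'_has_real_derivative assms refl | simp add: algebra_simps)+
    show "((\<lambda>y. 1 - (t + 1) * u y + y * u y ^ 2) has_real_derivative
        - (t + 1) * u' y + (u y ^ 2 + y * (2 * u y * u' y))) (at y)"
      by (rule derivative_eq_intros u_has_real_derivative assms refl | simp add: algebra_simps)+
  qed (use assms in simp_all)
  then show ?thesis
    by (simp add: algebra_simps)
qed

lemma riccati_deriv2:
  assumes "B 0 y \<noteq> 0"
  shows "(t + 3) * u'' y + y * deriv u'' y
    = 4 * u y * u' y + 2 * y * u' y ^ 2 + 2 * y * u y * u'' y"
proof -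
  have "(t + 2) * u'' y + (1 * u'' y + y * deriv u'' y)
      = 2 * u y * u' y + (2 * (1 * u y * u' y) + 2 * y * (u' y * u' y + u y * u'' y))"
  proof (rule DERIV_unique_on_open[OF open_B0_nonzero _ riccati_deriv])
    show "((\<lambda>y. (t + 2) * u' y + y * u'' y) has_real_derivative
        (t + 2) * u'' y + (1 * u'' y + y * deriv u'' y)) (at y)"
      by (rule derivative_eq_intros u'_has_real_derivative u''_has_real_derivative assms refl
          | simp add: algebra_simps)+
    show "((\<lambda>y. u y ^ 2 + 2 * y * u y * u' y) has_real_derivative
        2 * u y * u' y + (2 * (1 * u y * u' y) + 2 * y * (u' y * u' y + u y * u'' y))) (at y)"
      by (rule derivative_eq_intros u_has_real_derivative u'_has_real_derivative assms refl
          | simp add: algebra_simps)+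
  qed (use assms in simp_all)
  then show ?thesis
    by (simp add: algebra_simps power2_eq_square)
qed

lemma u_at_0: "u 0 = 1 / (t + 1)"
proof -
  have "t + 1 > 0"
    using order_gt by simp
  with riccati[OF B0_at_0] show ?thesis
    by (simp add: field_simps)
qed

lemma u_at_0_pos: "u 0 > 0"
  using order_gt by (simp add: u_at_0)

lemma u'_at_0_pos: "u' 0 > 0"
proof -
  have "(t + 2) * u' 0 > 0"
    using riccati_deriv[OF B0_at_0] u_at_0_pos by simp
  moreover have "t + 2 > 0"
    using order_gt by simp
  ultimately show ?thesis
    by (simp add: zero_less_mult_iff)
qed

lemma u''_at_0_pos: "u'' 0 > 0"
proof -
  have "(t + 3) * u'' 0 > 0"
    using riccati_deriv2[OF B0_at_0] u_at_0_pos u'_at_0_pos by simp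
  moreover have "t + 3 > 0"
    using order_gt by simp
  ultimately show ?thesis
    by (simp add: zero_less_mult_iff)
qed

lemma u_pos:
  assumes nonzero: "\<And>y. 0 \<le> y \<Longrightarrow> y \<le> b \<Longrightarrow> B 0 y \<noteq> 0" and "0 \<le> b"
  shows "u b > 0"
proof (rule pos_if_deriv_pos_at_zeros[OF \<open>0 \<le> b\<close>])
  show "(u has_real_derivative u' y) (at y)" if "0 \<le> y" "y \<le> b" for y
    using that by (intro u_has_real_derivative nonzero)
  show "u' y > 0" if "0 < y" "y \<le> b" "u y = 0" for y
  proof -
    have "y * u' y = 1"
      using riccati[OF nonzero[of y]] that by simp
    with \<open>0 < y\<close> show ?thesis
      using zero_less_mult_iff[of y "u' y"] by simp
  qed
qed (fact u_at_0_pos)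

lemma u'_pos:
  assumes nonzero: "\<And>y. 0 \<le> y \<Longrightarrow> y \<le> b \<Longrightarrow> B 0 y \<noteq> 0" and "0 \<le> b"
  shows "u' b > 0"
proof (rule pos_if_deriv_pos_at_zeros[OF \<open>0 \<le> b\<close>])
  show "(u' has_real_derivative u'' y) (at y)" if "0 \<le> y" "y \<le> b" for y
    using that by (intro u'_has_real_derivative nonzero)
  show "u'' y > 0" if "0 < y" "y \<le> b" "u' y = 0" for y
  proof -
    have "u y > 0"
      using nonzero that by (intro u_pos[of y]) auto
    moreover have "y * u'' y = u y ^ 2"
      using riccati_deriv[OF nonzero[of y]] that by simp
    ultimately show ?thesis
      using zero_less_mult_iff[of y "u'' y"] \<open>0 < y\<close> by simp
  qed
qed (fact u'_at_0_pos)

lemma u''_pos: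
  assumes nonzero: "\<And>y. 0 \<le> y \<Longrightarrow> y \<le> b \<Longrightarrow> B 0 y \<noteq> 0" and "0 \<le> b"
  shows "u'' b > 0"
proof (rule pos_if_deriv_pos_at_zeros[OF \<open>0 \<le> b\<close>])
  show "(u'' has_real_derivative deriv u'' y) (at y)" if "0 \<le> y" "y \<le> b" for y
    using that by (intro u''_has_real_derivative nonzero)
  show "deriv u'' y > 0" if "0 < y" "y \<le> b" "u'' y = 0" for y
  proof -
    have "u y > 0" "u' y > 0"
      using nonzero that by (intro u_pos[of y] u'_pos[of y]; auto)+
    then have "4 * u y * u' y + 2 * y * u' y ^ 2 > 0"
      using \<open>0 < y\<close> by (intro add_pos_nonneg) simp_all
    moreover have "y * deriv u'' y = 4 * u y * u' y + 2 * y * u' y ^ 2"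
      using riccati_deriv2[OF nonzero[of y]] that by simp
    ultimately show ?thesis
      using zero_less_mult_iff[of y "deriv u'' y"] \<open>0 < y\<close> by simp
  qed
qed (fact u''_at_0_pos)

lemma u_plus_y_u'_strict_mono:
  assumes nonzero: "\<And>y. 0 \<le> y \<Longrightarrow> y \<le> b \<Longrightarrow> B 0 y \<noteq> 0"
  shows "strict_mono_on {0..b} (\<lambda>y. u y + y * u' y)"
proof (rule strict_mono_onI)
  fix y1 y2 assume "y1 \<in> {0..b}" "y2 \<in> {0..b}" "y1 < y2"
  have "\<exists>D. ((\<lambda>y. u y + y * u' y) has_real_derivative D) (at y) \<and> D > 0"
    if "y1 \<le> y" "y \<le> y2" for y
  proof (intro exI conjI)
    have nonzero_y: "\<And>z. 0 \<le> z \<Longrightarrow> z \<le> y \<Longrightarrow> B 0 z \<noteq> 0"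
      using nonzero that \<open>y2 \<in> {0..b}\<close> by auto
    have "0 \<le> y"
      using that \<open>y1 \<in> {0..b}\<close> by auto
    have B0_y: "B 0 y \<noteq> 0"
      using nonzero_y \<open>0 \<le> y\<close> by simp
    show "((\<lambda>y. u y + y * u' y) has_real_derivative 2 * u' y + y * u'' y) (at y)"
      by (rule derivative_eq_intros u_has_real_derivative u'_has_real_derivative B0_y refl | simp)+
    show "2 * u' y + y * u'' y > 0"
      using u'_pos[of y, OF nonzero_y] u''_pos[of y, OF nonzero_y] \<open>0 \<le> y\<close>
      by (simp add: add_pos_nonneg)
  qed
  then show "u y1 + y1 * u' y1 < u y2 + y2 * u' y2"
    using DERIV_pos_imp_increasing[where f = "\<lambda>y. u y + y * u' y", OF \<open>y1 < y2\<close>] by blast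
qed

lemma B0_nonzero_below_first_zero:
  assumes "0 \<le> y" and "2 * sqrt y < bessel_zero t"
  shows "B 0 y \<noteq> 0"
proof (cases "y = 0")
  case True
  with B0_at_0 show ?thesis
    by simp
next
  case False
  with assms(1) have r: "2 * sqrt y > 0"
    by simp
  then have "besselJ t (2 * sqrt y) \<noteq> 0"
    using assms(2) by (rule besselJ_nonzero_below_first_zero)
  moreover have "(2 * sqrt y)\<^sup>2 / 4 = y"
    using assms(1) by (simp add: power_mult_distrib)
  ultimately show ?thesis
    using besselJ_eq_bessel_series[OF order_gt r] by (auto simp: B_def)
qed

lemma h_u_eq:
  assumes "r > 0"
  shows "h_u t r = 2 * (r\<^sup>2 / 4 * u (r\<^sup>2 / 4))"
proof -
  have "besselJ (t + 1) r = (r / 2) powr t * (r / 2) * B 1 (r\<^sup>2 / 4)"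
    using besselJ_eq_bessel_series[of "t + 1" r] order_gt assms by (simp add: B_def powr_add)
  moreover have "besselJ t r = (r / 2) powr t * B 0 (r\<^sup>2 / 4)"
    using besselJ_eq_bessel_series[of t r] order_gt assms by (simp add: B_def)
  moreover have "(r / 2) powr t > 0"
    using assms by simp
  ultimately show ?thesis
    unfolding h_u_def u_def
    by (cases "B 0 (r\<^sup>2 / 4) = 0") (auto simp: field_simps power2_eq_square)
qed

lemma deriv_h_u_over_r:
  assumes "r > 0" and "B 0 (r\<^sup>2 / 4) \<noteq> 0"
  shows "deriv (h_u t) r / r = u (r\<^sup>2 / 4) + r\<^sup>2 / 4 * u' (r\<^sup>2 / 4)"
proof -
  define y where "y = r\<^sup>2 / 4"
  have B0_y: "B 0 y \<noteq> 0"
    using assms(2) by (simp add: y_def)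
  have "((\<lambda>y. y * u y) has_real_derivative u y + y * u' y) (at y)"
    by (rule derivative_eq_intros u_has_real_derivative B0_y refl | simp)+
  moreover have "((\<lambda>r. r\<^sup>2 / 4) has_real_derivative r / 2) (at r)"
    by (rule derivative_eq_intros refl | simp)+
  ultimately have "((\<lambda>r. 2 * (r\<^sup>2 / 4 * u (r\<^sup>2 / 4))) has_real_derivative
      2 * ((u y + y * u' y) * (r / 2))) (at r)"
    unfolding y_def by (intro DERIV_cmult DERIV_chain2)
  then have "(h_u t has_real_derivative 2 * ((u y + y * u' y) * (r / 2))) (at r)"
    by (rule has_field_derivative_transform_within_open[where S = "{0<..}"])
      (use assms(1) h_u_eq in auto)
  then show ?thesis
    using assms(1) unfolding y_def by (simp add: DERIV_imp_deriv)
qed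

end

theorem propositionA2:
  fixes \<tau> :: real
  assumes "\<tau> > -1"
  shows "strict_mono_on {0<..<bessel_zero \<tau>} (\<lambda>r. deriv (h_u \<tau>) r / r)"
proof (rule strict_mono_onI)
  interpret bessel_ratio \<tau>
    using assms by unfold_locales
  fix r1 r2
  assume r1: "r1 \<in> {0<..<bessel_zero \<tau>}" and r2: "r2 \<in> {0<..<bessel_zero \<tau>}" and "r1 < r2"
  have nonzero: "B 0 y \<noteq> 0" if "0 \<le> y" "y \<le> r2\<^sup>2 / 4" for y
  proof (rule B0_nonzero_below_first_zero[OF \<open>0 \<le> y\<close>])
    have "2 * sqrt y \<le> 2 * sqrt (r2\<^sup>2 / 4)"
      using that by simp
    also have "\<dots> = r2"
      using r2 by (simp add: real_sqrt_divide)
    finally show "2 * sqrt y < bessel_zero \<tau>"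
      using r2 by simp
  qed
  have "0 \<le> r1\<^sup>2 / 4" "r1\<^sup>2 / 4 < r2\<^sup>2 / 4"
    using r1 \<open>r1 < r2\<close> by (simp_all add: power_strict_mono)
  then have "u (r1\<^sup>2 / 4) + r1\<^sup>2 / 4 * u' (r1\<^sup>2 / 4) < u (r2\<^sup>2 / 4) + r2\<^sup>2 / 4 * u' (r2\<^sup>2 / 4)"
    by (intro strict_mono_onD[OF u_plus_y_u'_strict_mono[of "r2\<^sup>2 / 4", OF nonzero]]) auto
  moreover have "deriv (h_u \<tau>) r / r = u (r\<^sup>2 / 4) + r\<^sup>2 / 4 * u' (r\<^sup>2 / 4)"
    if "r \<in> {r1, r2}" for r
    using that r1 r2 \<open>r1 < r2\<close> by (intro deriv_h_u_over_r nonzero) (auto intro: power_mono)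
  ultimately show "deriv (h_u \<tau>) r1 / r1 < deriv (h_u \<tau>) r2 / r2"
    by simp
qed

end
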